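(* Consider the following two-phase MIX communication protocol between a single receiver $R$ and $v$ senders, run over $(t+1)^2$ distinct MIX servers organised into $t+1$ pairwise disjoint blocks $B_1,\dots,B_{t+1}$, where $B_k=\{MIX_{k,1},\dots,MIX_{k,t+1}\}$ and $MIX_{k,1}$ is called the leader of $B_k$ (so every MIX server belongs to exactly one block and is used in exactly one mixing step). Private channels connect $R$ with each server of $B_1$, each server of $B_k$ with each server of $B_{k+1}$ ($k\le t$), and each server of $B_{t+1}$ with each sender. Phase A (receiver to senders). $R$ has one-time pads $\pi^1_1,\dots,\pi^1_v\in\mathbb{F}_{2^l}$. For each $i$, $R$ splits $\pi^1_i$ into $t+1$ shares $\pi^1_{i,1},\dots,\pi^1_{i,t+1}\in\mathbb{F}_{2^l}$ (uniformly random subject to their XOR being $\pi^1_i$) and privately sends $\pi^1_{i,j}$ to $MIX_{1,j}$. Then for $k=1,\dots,t+1$: the leader of $B_k$ chooses a uniformly random permutation $\rho_k\in S_v$ and tells it to all servers in $B_k$, who reindex their shares by $\pi^k_{i,j}:=\pi^k_{\rho_k(i),j}$; the leader of $B_k$ chooses uniformly random modifiers $\omega^k_{i,j}\in\mathbb{F}_{2^l}$ and privately sends $\omega^k_{i,j}$ to $MIX_{k,j}$; each $MIX_{k,j}$ computes $\pi^{k+1}_{i,j}=\omega^k_{i,j}+\pi^k_{i,j}$ (addition in $\mathbb{F}_{2^l}$, i.e. XOR) and, if $k\le t$, sends $\pi^{k+1}_{i,j}$ to $MIX_{k+1,j}$. Finally, denoting the shares held by $MIX_{t+1,j}$ by $\phi_{i,j}$,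 $MIX_{t+1,j}$ sends $\phi_{i,j}$ to the $i$-th sender, who XORs the $t+1$ received shares to obtain its (permuted and modified) pad. Phase B (senders to receiver). Each sender XORs its secret message with the pad it reconstructed and sends the result to the leader of $B_{t+1}$; the ciphertexts are then passed back from leader to leader ($B_{t+1}$ to $B_t$ to $\dots$ to $B_1$ to $R$), each leader of $B_k$ undoing its step by removing (XORing) the modifiers $\omega^k_i=\bigoplus_j\omega^k_{i,j}$ and applying the inverse permutation $\rho_k^{-1}$; $R$ recovers each message by XORing with the corresponding original pad. Suppose the adversary is passive (it only observes, never deviates from the protocol), computationally unbounded, and controls (sees the complete view of) at most $t$ MIX servers. Then this protocol is a perfectly reliable, perfectly private and perfectly anonymous message transmission protocol.
   Context: Perfectly reliable: every transmitted message is received by its intended recipient with probability 1. Perfectly private: for any coalition of at most $t$ corrupted parties, their probability of correctly determining any transmitted message (pad or sender's secret) is the same whether or not they are given their view of the protocol. Perfectly anonymous: for any coalition of at most $t$ corrupted parties, their probability of correctly determining which sender sent (respectively received) any given message is the same whether or not they are given their view of the protocol. *)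

theory Defs
  imports "HOL-Probability.Probability" "HOL-Combinatorics.Permutations"
begin

text \<open>Field elements of F_(2^l) are the elements
 of an arbitrary finite field 'f of characteristic 2 (these are exactly the fields F_(2^l));
 field addition is XOR.  Indices are 0-based: senders/slots i < v, blocks k <= t,
 positions in a block j <= t; server (k,0) is the leader of block k.
 Vectors are functions nat => 'f (value 0 outside the index range).\<close>

record 'f coins =
  pad    :: "nat \<Rightarrow> 'f"
  share  :: "nat \<Rightarrow> nat \<Rightarrow> 'f"
  perm   :: "nat \<Rightarrow> nat \<Rightarrow> nat"
  modif  :: "nat \<Rightarrow> nat \<Rightarrow> nat \<Rightarrow> 'f"
  secret :: "nat \<Rightarrow> 'f"

definition share_set :: "nat \<Rightarrow> 'f::field \<Rightarrow> (nat \<Rightarrow> 'f) set" where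
  "share_set t p = {s. (\<forall>j>t. s j = 0) \<and> (\<Sum>j\<le>t. s j) = p}"

definition coins_pmf :: "nat \<Rightarrow> nat \<Rightarrow> (nat \<Rightarrow> 'f::{finite,field}) pmf \<Rightarrow> 'f coins pmf" where
  "coins_pmf v t Mdist =
     do {
       P \<leftarrow> Pi_pmf {..<v} 0 (\<lambda>_. pmf_of_set UNIV);
       S \<leftarrow> Pi_pmf {..<v} (\<lambda>_. 0) (\<lambda>i. pmf_of_set (share_set t (P i)));
       rho \<leftarrow> Pi_pmf {..t} id (\<lambda>_. pmf_of_set {p. p permutes {..<v}});
       omega \<leftarrow> Pi_pmf {..t} (\<lambda>_ _. 0)
                  (\<lambda>_. Pi_pmf {..<v} (\<lambda>_. 0) (\<lambda>_. Pi_pmf {..t} 0 (\<lambda>_. pmf_of_set UNIV)));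
       M \<leftarrow> Mdist;
       return_pmf \<lparr>pad = P, share = S, perm = rho, modif = omega, secret = M\<rparr>
     }"

text \<open>sh c k i j: share held (before reindexing) by server MIX_(k,j) for index i, i.e. pi^(k)_(i,j);
 sh c (Suc t) i j is phi_(i,j), the share sent to sender i.\<close>
primrec sh :: "('f::field) coins \<Rightarrow> nat \<Rightarrow> nat \<Rightarrow> nat \<Rightarrow> 'f" where
  "sh c 0 = share c"
| "sh c (Suc k) = (\<lambda>i j. modif c k i j + sh c k (perm c k i) j)"

definition sender_pad :: "nat \<Rightarrow> ('f::field) coins \<Rightarrow> nat \<Rightarrow> 'f" where
  "sender_pad t c i = (\<Sum>j\<le>t. sh c (Suc t) i j)"

definition Omega :: "nat \<Rightarrow> ('f::field) coins \<Rightarrow> nat \<Rightarrow> nat \<Rightarrow> 'f" where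
  "Omega t c k i = (\<Sum>j\<le>t. modif c k i j)"

text \<open>Phase B.  bwd v t c m is the ciphertext vector at level Suc t - m: level Suc t is what
 the senders send to the leader of block t; the leader of block k turns the vector of level
 Suc k into the vector of level k; level 0 is delivered to R.\<close>
primrec bwd :: "nat \<Rightarrow> nat \<Rightarrow> ('f::field) coins \<Rightarrow> nat \<Rightarrow> nat \<Rightarrow> 'f" where
  "bwd v t c 0 = (\<lambda>i. if i < v then secret c i + sender_pad t c i else 0)"
| "bwd v t c (Suc m) =
     (\<lambda>a. if a < v then
             bwd v t c m (inv_into {..<v} (perm c (t - m)) a)
             + Omega t c (t - m) (inv_into {..<v} (perm c (t - m)) a)
           else 0)"

definition cipher_level :: "nat \<Rightarrow> nat \<Rightarrow> ('f::field) coins \<Rightarrow> nat \<Rightarrow> nat \<Rightarrow> 'f" where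
  "cipher_level v t c k = bwd v t c (Suc t - k)"

definition received :: "nat \<Rightarrow> nat \<Rightarrow> ('f::field) coins \<Rightarrow> nat \<Rightarrow> 'f" where
  "received v t c a = cipher_level v t c 0 a + pad c a"

text \<open>Overall routing: sender i obtains the pad of slot rho_0(rho_1(...rho_t(i))).\<close>
primrec comp_perm :: "'f coins \<Rightarrow> nat \<Rightarrow> nat \<Rightarrow> nat" where
  "comp_perm c 0 = id"
| "comp_perm c (Suc n) = comp_perm c n \<circ> perm c n"

text \<open>The sender that receives R's pad of slot a (and hence whose message R recovers in slot a).\<close>
definition sender_of :: "nat \<Rightarrow> nat \<Rightarrow> 'f coins \<Rightarrow> nat \<Rightarrow> nat" where
  "sender_of v t c a = inv_into {..<v} (comp_perm c (Suc t)) a"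

definition viewA :: "nat \<Rightarrow> nat \<Rightarrow> ('f::field) coins \<Rightarrow> nat \<times> nat \<Rightarrow>
    (nat \<Rightarrow> 'f) \<times> (nat \<Rightarrow> nat) \<times> (nat \<Rightarrow> 'f) \<times> (nat \<Rightarrow> nat \<Rightarrow> 'f) option" where
  "viewA v t c s = (case s of (k, j) \<Rightarrow>
     ((\<lambda>i. if i < v then sh c k i j else 0),
      perm c k,
      (\<lambda>i. if i < v then modif c k i j else 0),
      (if j = 0 then Some (\<lambda>i j'. if i < v \<and> j' \<le> t then modif c k i j' else 0) else None)))"

definition viewAB :: "nat \<Rightarrow> nat \<Rightarrow> ('f::field) coins \<Rightarrow> nat \<times> nat \<Rightarrow>
    ((nat \<Rightarrow> 'f) \<times> (nat \<Rightarrow> nat) \<times> (nat \<Rightarrow> 'f) \<times> (nat \<Rightarrow> nat \<Rightarrow> 'f) option) \<times> (nat \<Rightarrow> 'f) option" where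
  "viewAB v t c s = (viewA v t c s,
     (case s of (k, j) \<Rightarrow> if j = 0 then Some (cipher_level v t c (Suc k)) else None))"

definition coalition_view :: "(nat \<times> nat) set \<Rightarrow> (nat \<times> nat \<Rightarrow> 'w) \<Rightarrow> nat \<times> nat \<Rightarrow> 'w option" where
  "coalition_view C V = (\<lambda>s. if s \<in> C then Some (V s) else None)"

text \<open>Probability of correctly determining X from information W (computationally unbounded
 guesser g), for a joint distribution J of (W, X).\<close>
definition guess_prob :: "('w \<times> 'x) pmf \<Rightarrow> real" where
  "guess_prob J = (SUP g. measure_pmf.prob J {p. g (fst p) = snd p})"

definition view_useless :: "'c pmf \<Rightarrow> ('c \<Rightarrow> 'w) \<Rightarrow> ('c \<Rightarrow> 'x) \<Rightarrow> bool" where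
  "view_useless D W X \<longleftrightarrow>
     guess_prob (map_pmf (\<lambda>c. (W c, X c)) D) = guess_prob (map_pmf (\<lambda>c. ((), X c)) D)"

end

theory Submission
  imports Defs
begin

text \<open>
  Reliability: the leaders undo the modifiers and the permutations in reverse order, and in
  characteristic 2 every modifier cancels against itself, so R receives in slot a the secret
  of the sender to which slot a was routed, masked by the pad R holds for that slot.

  Privacy and anonymity: all randomness is uniform on a finite set of choices, so a quantity
  is hidden from a coalition as soon as, for any two of its values, some bijection of the
  choices preserves the coalition's view and turns the first value into the second.  A
  coalition of at most t servers misses a whole block k0 and a whole column j0 (position j0
  in every block).  Adding a vector to the column-j0 shares changes no share the coalition
  sees but shifts the pads by that vector; this hides the pads and, after moving the secrets
  into the shares, the secrets.  Composing the permutation of block k0 with a transposition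
  routes any pad to any sender; the column-j0 shares and the modifiers of block k0 absorb the
  change, so the coalition's view is again unchanged.
\<close>

section \<open>Guessing probabilities and independence\<close>

lemma emeasure_pair_pmf_guess:
  "emeasure (measure_pmf (pair_pmf Q1 Q2)) {p. g (fst p) = snd p}
     = (\<integral>\<^sup>+ a. ennreal (pmf Q2 (g a)) \<partial>Q1)"
proof -
  have "pair_pmf Q1 Q2 = bind_pmf Q1 (\<lambda>x. map_pmf (Pair x) Q2)"
    by (simp add: pair_pmf_def map_pmf_def)
  moreover have "emeasure (measure_pmf (map_pmf (Pair x) Q2)) {p. g (fst p) = snd p}
      = ennreal (pmf Q2 (g x))" for x
    by (simp add: emeasure_pmf_single vimage_def eq_commute)
  ultimately show ?thesis by simp
qed

lemma guess_prob_pair_pmf: "guess_prob (pair_pmf Q1 Q2) = (SUP x. pmf Q2 x)"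
proof -
  have bdd: "bdd_above (range (pmf Q2))" by (auto intro!: bdd_aboveI[where M=1] pmf_le_1)
  have upper: "measure_pmf.prob (pair_pmf Q1 Q2) {p. g (fst p) = snd p} \<le> (SUP x. pmf Q2 x)" for g
  proof -
    have "emeasure (measure_pmf (pair_pmf Q1 Q2)) {p. g (fst p) = snd p}
        \<le> (\<integral>\<^sup>+ a. ennreal (SUP x. pmf Q2 x) \<partial>Q1)"
      unfolding emeasure_pair_pmf_guess by (intro nn_integral_mono ennreal_leI cSUP_upper bdd) auto
    also have "\<dots> = ennreal (SUP x. pmf Q2 x)"
      by (simp add: measure_pmf.emeasure_space_1)
    finally have "ennreal (measure_pmf.prob (pair_pmf Q1 Q2) {p. g (fst p) = snd p})
        \<le> ennreal (SUP x. pmf Q2 x)"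
      by (simp add: measure_pmf.emeasure_eq_measure)
    moreover have "0 \<le> (SUP x. pmf Q2 x)" by (meson cSUP_upper2[OF bdd] pmf_nonneg UNIV_I)
    ultimately show ?thesis by (simp add: ennreal_le_iff)
  qed
  have constant_guess: "pmf Q2 x = measure_pmf.prob (pair_pmf Q1 Q2) {p. x = snd p}" for x
    using emeasure_pair_pmf_guess[of Q1 Q2 "\<lambda>_. x"]
    by (simp add: measure_pmf.emeasure_space_1 measure_pmf.emeasure_eq_measure)
  have bdd_guess: "bdd_above (range (\<lambda>g. measure_pmf.prob (pair_pmf Q1 Q2) {p. g (fst p) = snd p}))"
    by (auto intro!: bdd_aboveI[where M=1])
  show ?thesis unfolding guess_prob_def
  proof (rule antisym)
    show "(SUP g. measure_pmf.prob (pair_pmf Q1 Q2) {p. g (fst p) = snd p}) \<le> (SUP x. pmf Q2 x)"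
      by (rule cSUP_least) (auto intro: upper)
    show "(SUP x. pmf Q2 x) \<le> (SUP g. measure_pmf.prob (pair_pmf Q1 Q2) {p. g (fst p) = snd p})"
      using cSUP_upper[OF _ bdd_guess, of "\<lambda>_. x" for x]
      by (intro cSUP_least) (auto simp: constant_guess)
  qed
qed

lemma guess_prob_map_fst_le:
  "guess_prob (map_pmf (\<lambda>(w, x). (f w, x)) J) \<le> guess_prob J"
proof -
  have bdd: "bdd_above (range (\<lambda>g. measure_pmf.prob J {p. g (fst p) = snd p}))"
    by (auto intro!: bdd_aboveI[where M=1])
  have "measure_pmf.prob (map_pmf (\<lambda>(w, x). (f w, x)) J) {p. g (fst p) = snd p}
      = measure_pmf.prob J {p. (g \<circ> f) (fst p) = snd p}" for g
    by (simp add: case_prod_beta vimage_def)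
  then show ?thesis unfolding guess_prob_def
    by (intro cSUP_least) (auto intro: cSUP_upper2[OF bdd])
qed

lemma view_useless_coarsen:
  assumes "view_useless D W X"
  shows "view_useless D (\<lambda>c. f (W c)) X"
proof -
  let ?J = "\<lambda>W. map_pmf (\<lambda>c. (W c, X c)) D"
  have "guess_prob (?J (\<lambda>_. ())) \<le> guess_prob (?J (\<lambda>c. f (W c)))"
    using guess_prob_map_fst_le[of "\<lambda>_. ()" "?J (\<lambda>c. f (W c))"] by (simp add: map_pmf_comp)
  moreover have "guess_prob (?J (\<lambda>c. f (W c))) \<le> guess_prob (?J W)"
    using guess_prob_map_fst_le[of f "?J W"] by (simp add: map_pmf_comp)
  ultimately show ?thesis
    using assms unfolding view_useless_def by linarith
qed

lemma view_useless_if_indep: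
  assumes "map_pmf (\<lambda>c. (W c, X c)) D = pair_pmf Q1 Q2"
  shows "view_useless D W X"
proof -
  have "map_pmf X D = Q2"
    using arg_cong[OF assms, of "map_pmf snd"] by (simp add: map_pmf_comp map_snd_pair_pmf)
  hence "map_pmf (\<lambda>c. ((), X c)) D = pair_pmf (return_pmf ()) Q2"
    by (simp add: pair_return_pmf1 map_pmf_comp[symmetric, of "Pair ()" X, unfolded o_def])
  thus ?thesis using assms unfolding view_useless_def by (simp add: guess_prob_pair_pmf)
qed

lemma map_pmf_pair_eq_bind:
  "map_pmf (\<lambda>(b, m). F m b) (pair_pmf B M) = bind_pmf M (\<lambda>m. map_pmf (F m) B)"
  by (subst pair_commute_pmf) (simp add: pair_pmf_def map_pmf_def bind_assoc_pmf bind_return_pmf)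

text \<open>Two ways in which a view stays useless when a parameter m (the senders' secrets) is
 mixed in: given m the view is independent of a target whose law does not depend on m, or
 the law of the view does not depend on m and the target is a function of m.\<close>

lemma view_useless_mixture_indep:
  assumes D: "D = map_pmf (\<lambda>(b, m). c b m) (pair_pmf B M)"
    and indep: "\<And>m. m \<in> set_pmf M \<Longrightarrow>
       map_pmf (\<lambda>b. (W (c b m), X (c b m))) B = pair_pmf (Q1 m) Q2"
  shows "view_useless D W X"
proof (rule view_useless_if_indep)
  have "map_pmf (\<lambda>c. (W c, X c)) D = map_pmf (\<lambda>(b, m). (W (c b m), X (c b m))) (pair_pmf B M)"
    unfolding D map_pmf_comp by (simp add: case_prod_beta')
  also have "\<dots> = bind_pmf M (\<lambda>m. map_pmf (\<lambda>b. (W (c b m), X (c b m))) B)"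
    by (rule map_pmf_pair_eq_bind)
  also have "\<dots> = bind_pmf M (\<lambda>m. pair_pmf (Q1 m) Q2)"
    by (rule bind_pmf_cong) (simp_all add: indep)
  also have "\<dots> = pair_pmf (bind_pmf M Q1) Q2"
    by (simp add: pair_pmf_def bind_assoc_pmf)
  finally show "map_pmf (\<lambda>c. (W c, X c)) D = pair_pmf (bind_pmf M Q1) Q2" .
qed

lemma view_useless_mixture_param_free:
  assumes D: "D = map_pmf (\<lambda>(b, m). c b m) (pair_pmf B M)"
    and law: "\<And>m. m \<in> set_pmf M \<Longrightarrow> map_pmf (\<lambda>b. W (c b m)) B = Q"
    and X: "\<And>b m. X (c b m) = g m"
  shows "view_useless D W X"
proof (rule view_useless_if_indep)
  have "map_pmf (\<lambda>c. (W c, X c)) D = map_pmf (\<lambda>(b, m). (W (c b m), g m)) (pair_pmf B M)"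
    unfolding D map_pmf_comp by (simp add: case_prod_beta' X)
  also have "\<dots> = bind_pmf M (\<lambda>m. map_pmf (\<lambda>w. (w, g m)) (map_pmf (\<lambda>b. W (c b m)) B))"
    by (simp add: map_pmf_pair_eq_bind map_pmf_comp)
  also have "\<dots> = bind_pmf M (\<lambda>m. map_pmf (\<lambda>w. (w, g m)) Q)"
    by (rule bind_pmf_cong) (simp_all add: law)
  also have "\<dots> = pair_pmf Q (map_pmf g M)"
    by (subst pair_commute_pmf) (simp add: pair_pmf_def map_pmf_def bind_assoc_pmf bind_return_pmf)
  finally show "map_pmf (\<lambda>c. (W c, X c)) D = pair_pmf Q (map_pmf g M)" .
qed

lemma pair_pmf_of_set:
  assumes "finite A" "A \<noteq> {}" "finite B" "B \<noteq> {}"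
  shows "pair_pmf (pmf_of_set A) (pmf_of_set B) = pmf_of_set (A \<times> B)"
proof (rule pmf_eqI)
  fix i :: "'a \<times> 'b"
  show "pmf (pair_pmf (pmf_of_set A) (pmf_of_set B)) i = pmf (pmf_of_set (A \<times> B)) i"
    by (cases i) (simp add: assms pmf_pair card_cartesian_product split: split_indicator)
qed

lemma card_fibres_eq_by_symmetry:
  assumes B: "finite B"
    and sym: "\<And>x x'. x \<in> Xs \<Longrightarrow> x' \<in> Xs \<Longrightarrow> \<exists>\<phi>. bij_betw \<phi> B B
       \<and> (\<forall>b\<in>B. W (\<phi> b) = W b) \<and> (\<forall>b\<in>B. X b = x \<longrightarrow> X (\<phi> b) = x')"
    and x: "x \<in> Xs" "x' \<in> Xs"
  shows "card {b\<in>B. W b = w \<and> X b = x} = card {b\<in>B. W b = w \<and> X b = x'}"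
proof -
  have le: "card {b\<in>B. W b = w \<and> X b = y} \<le> card {b\<in>B. W b = w \<and> X b = y'}"
    if y: "y \<in> Xs" "y' \<in> Xs" for y y'
  proof -
    obtain \<phi> where \<phi>: "bij_betw \<phi> B B" "\<forall>b\<in>B. W (\<phi> b) = W b"
      "\<forall>b\<in>B. X b = y \<longrightarrow> X (\<phi> b) = y'"
      using sym[OF y] by blast
    have "inj_on \<phi> {b\<in>B. W b = w \<and> X b = y}"
      using \<phi>(1) by (rule inj_on_subset[OF bij_betw_imp_inj_on]) auto
    moreover have "\<phi> ` {b\<in>B. W b = w \<and> X b = y} \<subseteq> {b\<in>B. W b = w \<and> X b = y'}"
      using \<phi> bij_betwE[OF \<phi>(1)] by auto
    ultimately show ?thesis using B by (intro card_inj_on_le) auto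
  qed
  show ?thesis using le[OF x] le[OF x(2,1)] by (rule antisym)
qed

lemma map_pmf_of_set_indep_by_symmetry:
  fixes W :: "'b \<Rightarrow> 'w" and X :: "'b \<Rightarrow> 'x"
  assumes B: "finite B" "B \<noteq> {}" and Xs: "finite Xs" "Xs \<noteq> {}"
    and X_in: "\<And>b. b \<in> B \<Longrightarrow> X b \<in> Xs"
    and sym: "\<And>x x'. x \<in> Xs \<Longrightarrow> x' \<in> Xs \<Longrightarrow> \<exists>\<phi>. bij_betw \<phi> B B
       \<and> (\<forall>b\<in>B. W (\<phi> b) = W b) \<and> (\<forall>b\<in>B. X b = x \<longrightarrow> X (\<phi> b) = x')"
  shows "map_pmf (\<lambda>b. (W b, X b)) (pmf_of_set B) = pair_pmf (map_pmf W (pmf_of_set B)) (pmf_of_set Xs)"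
proof (rule pmf_eqI)
  fix i :: "'w \<times> 'x"
  obtain w x where i: "i = (w, x)" by (cases i)
  define E where "E y = {b\<in>B. W b = w \<and> X b = y}" for y
  have "B \<inter> (\<lambda>b. (W b, X b)) -` {i} = E x" by (auto simp: E_def i)
  hence lhs: "pmf (map_pmf (\<lambda>b. (W b, X b)) (pmf_of_set B)) i = card (E x) / card B"
    unfolding pmf_map by (simp add: measure_pmf_of_set B)
  have "B \<inter> W -` {w} = {b\<in>B. W b = w}" by auto
  hence rhs: "pmf (pair_pmf (map_pmf W (pmf_of_set B)) (pmf_of_set Xs)) i
      = card {b\<in>B. W b = w} / card B * (indicator Xs x / card Xs)"
    unfolding i pmf_pair pmf_map by (simp add: measure_pmf_of_set B Xs)
  show "pmf (map_pmf (\<lambda>b. (W b, X b)) (pmf_of_set B)) i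
      = pmf (pair_pmf (map_pmf W (pmf_of_set B)) (pmf_of_set Xs)) i"
  proof (cases "x \<in> Xs")
    case True
    have "{b\<in>B. W b = w} = (\<Union>y\<in>Xs. E y)" using X_in by (auto simp: E_def)
    hence "card {b\<in>B. W b = w} = (\<Sum>y\<in>Xs. card (E y))"
      using B Xs by (simp only:) (rule card_UN_disjoint, auto simp: E_def)
    also have "\<dots> = card Xs * card (E x)"
      using card_fibres_eq_by_symmetry[OF B(1) sym _ True] by (simp add: E_def)
    finally show ?thesis unfolding lhs rhs using True Xs by (simp add: card_gt_0_iff)
  next
    case False
    hence "E x = {}" using X_in by (auto simp: E_def)
    thus ?thesis unfolding lhs rhs using False by simp
  qed
qed

section \<open>The protocol's randomness as a uniform choice\<close>

definition share_vecs :: "nat \<Rightarrow> (nat \<Rightarrow> 'f::zero) set" where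
  "share_vecs t = PiE_dflt {..t} 0 (\<lambda>_. UNIV)"

definition share_mats :: "nat \<Rightarrow> nat \<Rightarrow> (nat \<Rightarrow> nat \<Rightarrow> 'f::zero) set" where
  "share_mats v t = PiE_dflt {..<v} (\<lambda>_. 0) (\<lambda>_. share_vecs t)"

definition perm_seqs :: "nat \<Rightarrow> nat \<Rightarrow> (nat \<Rightarrow> nat \<Rightarrow> nat) set" where
  "perm_seqs v t = PiE_dflt {..t} id (\<lambda>_. {p. p permutes {..<v}})"

definition modif_arrays :: "nat \<Rightarrow> nat \<Rightarrow> (nat \<Rightarrow> nat \<Rightarrow> nat \<Rightarrow> 'f::zero) set" where
  "modif_arrays v t = PiE_dflt {..t} (\<lambda>_ _. 0) (\<lambda>_. share_mats v t)"

text \<open>Shares S i j, permutations \<rho> k and modifiers \<omega> k i j chosen in one run.\<close>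
type_synonym 'f choice = "(nat \<Rightarrow> nat \<Rightarrow> 'f) \<times> (nat \<Rightarrow> nat \<Rightarrow> nat) \<times> (nat \<Rightarrow> nat \<Rightarrow> nat \<Rightarrow> 'f)"

definition coin_space :: "nat \<Rightarrow> nat \<Rightarrow> ('f::zero) choice set" where
  "coin_space v t = share_mats v t \<times> perm_seqs v t \<times> modif_arrays v t"

definition row_sums :: "nat \<Rightarrow> (nat \<Rightarrow> nat \<Rightarrow> 'f::comm_monoid_add) \<Rightarrow> nat \<Rightarrow> 'f" where
  "row_sums t S = (\<lambda>i. \<Sum>j\<le>t. S i j)"

text \<open>The pads are not sampled separately: they are determined by the shares.\<close>
definition coins_of :: "nat \<Rightarrow> ('f::comm_monoid_add) choice \<Rightarrow> (nat \<Rightarrow> 'f) \<Rightarrow> 'f coins" where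
  "coins_of t b m = \<lparr>pad = row_sums t (fst b), share = fst b, perm = fst (snd b),
     modif = snd (snd b), secret = m\<rparr>"

lemma coins_of_simps [simp]:
  "pad (coins_of t b m) = row_sums t (fst b)"
  "share (coins_of t b m) = fst b"
  "perm (coins_of t b m) = fst (snd b)"
  "modif (coins_of t b m) = snd (snd b)"
  "secret (coins_of t b m) = m"
  by (simp_all add: coins_of_def)

lemma mem_share_vecs: "s \<in> share_vecs t \<longleftrightarrow> (\<forall>j>t. s j = 0)"
  by (auto simp: share_vecs_def PiE_dflt_def)

lemma mem_share_mats: "S \<in> share_mats v t \<longleftrightarrow> (\<forall>i j. v \<le> i \<or> t < j \<longrightarrow> S i j = 0)"
  by (auto simp: share_mats_def mem_share_vecs PiE_dflt_def fun_eq_iff not_less)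

lemma mem_perm_seqs:
  "\<rho> \<in> perm_seqs v t \<longleftrightarrow> (\<forall>k\<le>t. \<rho> k permutes {..<v}) \<and> (\<forall>k>t. \<rho> k = id)"
  by (auto simp: perm_seqs_def PiE_dflt_def not_le)

lemma mem_modif_arrays:
  "\<omega> \<in> modif_arrays v t \<longleftrightarrow> (\<forall>k i j. t < k \<or> v \<le> i \<or> t < j \<longrightarrow> \<omega> k i j = 0)"
  by (auto simp: modif_arrays_def mem_share_mats PiE_dflt_def fun_eq_iff not_le; meson leI)

lemma finite_share_vecs: "finite (share_vecs t :: (nat \<Rightarrow> 'f::{zero,finite}) set)"
  by (auto simp: share_vecs_def)

lemma share_vecs_nonempty: "share_vecs t \<noteq> {}"
  by (simp add: share_vecs_def)

lemma ex_permutes [simp]: "\<exists>p. p permutes A"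
  using permutes_id by blast

lemma finite_share_mats: "finite (share_mats v t :: (nat \<Rightarrow> nat \<Rightarrow> 'f::{zero,finite}) set)"
  by (auto simp: share_mats_def finite_share_vecs)

lemma finite_perm_seqs: "finite (perm_seqs v t)"
  by (auto simp: perm_seqs_def finite_permutations)

lemma finite_modif_arrays:
  "finite (modif_arrays v t :: (nat \<Rightarrow> nat \<Rightarrow> nat \<Rightarrow> 'f::{zero,finite}) set)"
  by (auto simp: modif_arrays_def finite_share_mats)

lemma finite_coin_space: "finite (coin_space v t :: ('f::{zero,finite}) choice set)"
  by (simp add: coin_space_def finite_share_mats finite_perm_seqs finite_modif_arrays)

lemma
  shows share_mats_nonempty: "share_mats v t \<noteq> {}"
    and perm_seqs_nonempty: "perm_seqs v t \<noteq> {}"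
    and modif_arrays_nonempty: "modif_arrays v t \<noteq> {}"
  by (simp_all add: perm_seqs_def modif_arrays_def share_mats_def share_vecs_def)

lemma coin_space_nonempty: "coin_space v t \<noteq> {}"
  by (simp add: coin_space_def share_mats_nonempty perm_seqs_nonempty modif_arrays_nonempty)

lemma finite_share_set: "finite (share_set t (p::'f::{field,finite}))"
  by (rule finite_subset[OF _ finite_share_vecs]) (auto simp: share_set_def mem_share_vecs)

lemma card_share_set: "card (share_set t (p::'f::field)) = card (share_set t (0::'f))"
proof -
  define e :: "nat \<Rightarrow> 'f" where "e = (\<lambda>j. if j = 0 then p else 0)"
  have "share_set t p = (\<lambda>s j. s j + e j) ` share_set t 0"
  proof (intro equalityI subsetI)
    fix s assume "s \<in> share_set t p"
    hence "(\<lambda>j. s j - e j) \<in> share_set t 0"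
      by (auto simp: share_set_def e_def sum_subtractf)
    thus "s \<in> (\<lambda>s j. s j + e j) ` share_set t 0"
      by (intro image_eqI[where x="\<lambda>j. s j - e j"]) auto
  qed (auto simp: share_set_def e_def sum.distrib)
  moreover have "inj_on (\<lambda>s j. s j + e j) (share_set t (0::'f))"
    by (rule inj_onI) (simp add: fun_eq_iff)
  ultimately show ?thesis by (simp add: card_image)
qed

lemma share_set_nonempty: "share_set t (p::'f::field) \<noteq> {}"
proof -
  have "(\<lambda>j. if j = 0 then p else 0) \<in> share_set t p" by (auto simp: share_set_def)
  thus ?thesis by blast
qed

lemma bind_pmf_of_set_share_set:
  "bind_pmf (pmf_of_set UNIV) (\<lambda>p. pmf_of_set (share_set t p))
     = pmf_of_set (share_vecs t :: (nat \<Rightarrow> 'f::{field,finite}) set)"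
proof -
  have "share_vecs t = (\<Union>p. share_set t (p::'f))"
    by (auto simp: share_set_def mem_share_vecs)
  moreover have "pmf_of_set (\<Union>p. share_set t (p::'f))
      = bind_pmf (pmf_of_set UNIV) (\<lambda>p. pmf_of_set (share_set t p))"
  proof (rule pmf_of_set_UN[where n="card (share_set t (0::'f))"])
    show "finite (\<Union>p. share_set t (p::'f))" by (simp add: finite_share_set)
    show "disjoint_family_on (share_set t) (UNIV::'f set)"
      by (auto simp: disjoint_family_on_def share_set_def)
  qed (auto simp: share_set_nonempty intro: card_share_set)
  ultimately show ?thesis by simp
qed

lemma bind_pmf_of_pads_shares:
  "bind_pmf (Pi_pmf {..<v} 0 (\<lambda>_. pmf_of_set UNIV))
      (\<lambda>P. Pi_pmf {..<v} (\<lambda>_. 0) (\<lambda>i. pmf_of_set (share_set t (P i))))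
   = pmf_of_set (share_mats v t :: (nat \<Rightarrow> nat \<Rightarrow> 'f::{field,finite}) set)"
proof -
  have "pmf_of_set (share_mats v t :: (nat \<Rightarrow> nat \<Rightarrow> 'f) set)
      = Pi_pmf {..<v} (\<lambda>_. 0) (\<lambda>_. pmf_of_set (share_vecs t))"
    unfolding share_mats_def
    by (rule Pi_pmf_of_set[symmetric]) (auto simp: finite_share_vecs share_vecs_nonempty)
  also have "\<dots> = Pi_pmf {..<v} (\<lambda>_. 0)
      (\<lambda>_. bind_pmf (pmf_of_set UNIV) (\<lambda>p. pmf_of_set (share_set t p)))"
    by (simp add: bind_pmf_of_set_share_set)
  also have "\<dots> = bind_pmf (Pi_pmf {..<v} 0 (\<lambda>_. pmf_of_set UNIV))
      (\<lambda>P. Pi_pmf {..<v} (\<lambda>_. 0) (\<lambda>i. pmf_of_set (share_set t (P i))))"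
    by (rule Pi_pmf_bind) simp
  finally show ?thesis ..
qed

lemma row_sums_of_shares:
  assumes P: "P \<in> set_pmf (Pi_pmf {..<v} 0 (\<lambda>_. pmf_of_set UNIV))"
    and S: "S \<in> set_pmf (Pi_pmf {..<v} (\<lambda>_. 0) (\<lambda>i. pmf_of_set (share_set t (P i :: 'f::{field,finite}))))"
  shows "row_sums t S = P"
proof
  fix i
  show "row_sums t S i = P i"
  proof (cases "i < v")
    case True
    with S have "S i \<in> share_set t (P i)"
      by (auto simp: set_Pi_pmf PiE_dflt_def finite_share_set share_set_nonempty)
    then show ?thesis by (simp add: row_sums_def share_set_def)
  next
    case False
    then show ?thesis using S set_Pi_pmf_subset[of "{..<v}" 0 "\<lambda>_. pmf_of_set UNIV"] P
      by (auto simp: set_Pi_pmf PiE_dflt_def row_sums_def)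
  qed
qed

lemma coins_pmf_eq_uniform:
  "coins_pmf v t M = map_pmf (\<lambda>(b, m). coins_of t b m) (pair_pmf (pmf_of_set (coin_space v t)) M)"
proof -
  have shares: "bind_pmf (Pi_pmf {..<v} 0 (\<lambda>_. pmf_of_set UNIV))
      (\<lambda>P. bind_pmf (Pi_pmf {..<v} (\<lambda>_. 0) (\<lambda>i. pmf_of_set (share_set t (P i)))) (K P))
    = bind_pmf (pmf_of_set (share_mats v t)) (\<lambda>S. K (row_sums t S) S)"
    for K :: "(nat \<Rightarrow> 'a) \<Rightarrow> (nat \<Rightarrow> nat \<Rightarrow> 'a) \<Rightarrow> 'a coins pmf"
    unfolding bind_pmf_of_pads_shares[symmetric] bind_assoc_pmf
    by (intro bind_pmf_cong refl) (simp add: row_sums_of_shares)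
  have perms: "Pi_pmf {..t} id (\<lambda>_. pmf_of_set {p. p permutes {..<v}}) = pmf_of_set (perm_seqs v t)"
    unfolding perm_seqs_def
    by (intro Pi_pmf_of_set) (auto simp: finite_permutations)
  have modifs: "Pi_pmf {..t} (\<lambda>_ _. 0) (\<lambda>_. Pi_pmf {..<v} (\<lambda>_. 0)
        (\<lambda>_. Pi_pmf {..t} 0 (\<lambda>_. pmf_of_set UNIV)))
      = pmf_of_set (modif_arrays v t :: (nat \<Rightarrow> nat \<Rightarrow> nat \<Rightarrow> 'a) set)"
    unfolding modif_arrays_def share_mats_def share_vecs_def
    by (simp add: Pi_pmf_of_set finite_share_vecs[unfolded share_vecs_def]
        finite_share_mats[unfolded share_mats_def share_vecs_def])
  have space: "pmf_of_set (coin_space v t :: 'a choice set)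
     = pair_pmf (pmf_of_set (share_mats v t))
         (pair_pmf (pmf_of_set (perm_seqs v t)) (pmf_of_set (modif_arrays v t)))"
    unfolding coin_space_def
    by (simp add: pair_pmf_of_set finite_share_mats finite_perm_seqs finite_modif_arrays
        share_mats_nonempty perm_seqs_nonempty modif_arrays_nonempty)
  show ?thesis
    unfolding coins_pmf_def shares perms modifs space
    by (simp add: pair_pmf_def map_pmf_def bind_assoc_pmf bind_return_pmf coins_of_def)
qed

section \<open>Routing permutations\<close>

primrec perm_prefix :: "(nat \<Rightarrow> nat \<Rightarrow> nat) \<Rightarrow> nat \<Rightarrow> nat \<Rightarrow> nat" where
  "perm_prefix \<rho> 0 = id"
| "perm_prefix \<rho> (Suc n) = perm_prefix \<rho> n \<circ> \<rho> n"

primrec perm_segment :: "(nat \<Rightarrow> nat \<Rightarrow> nat) \<Rightarrow> nat \<Rightarrow> nat \<Rightarrow> nat \<Rightarrow> nat" where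
  "perm_segment \<rho> K 0 = id"
| "perm_segment \<rho> K (Suc n) = \<rho> K \<circ> perm_segment \<rho> (Suc K) n"

lemma comp_perm_eq_perm_prefix: "comp_perm c K = perm_prefix (perm c) K"
  by (induction K) auto

lemma perm_prefix_comp_segment: "perm_prefix \<rho> K \<circ> perm_segment \<rho> K n = perm_prefix \<rho> (K + n)"
proof (induction n arbitrary: K)
  case 0 thus ?case by simp
next
  case (Suc n)
  have "perm_prefix \<rho> K \<circ> perm_segment \<rho> K (Suc n) = perm_prefix \<rho> (Suc K) \<circ> perm_segment \<rho> (Suc K) n"
    by (simp add: o_assoc)
  also have "\<dots> = perm_prefix \<rho> (Suc K + n)" by (rule Suc.IH)
  finally show ?case by (simp only: add_Suc_shift)
qed

lemma perm_segment_cong: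
  "(\<And>l. K \<le> l \<Longrightarrow> l < K + n \<Longrightarrow> \<rho>' l = \<rho> l) \<Longrightarrow> perm_segment \<rho>' K n = perm_segment \<rho> K n"
proof (induction n arbitrary: K)
  case (Suc n)
  then have "perm_segment \<rho>' (Suc K) n = perm_segment \<rho> (Suc K) n" and "\<rho>' K = \<rho> K" by auto
  then show ?case by simp
qed simp

lemma perm_prefix_cong: "(\<And>l. l < K \<Longrightarrow> \<rho>' l = \<rho> l) \<Longrightarrow> perm_prefix \<rho>' K = perm_prefix \<rho> K"
  by (induction K) auto

lemma perm_seqs_permutes: "\<rho> \<in> perm_seqs v t \<Longrightarrow> k \<le> t \<Longrightarrow> \<rho> k permutes {..<v}"
  by (simp add: mem_perm_seqs)

lemma coin_space_perm_seqs: "b \<in> coin_space v t \<Longrightarrow> fst (snd b) \<in> perm_seqs v t"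
  by (auto simp: coin_space_def)

lemma perm_segment_permutes:
  "\<rho> \<in> perm_seqs v t \<Longrightarrow> K + n \<le> Suc t \<Longrightarrow> perm_segment \<rho> K n permutes {..<v}"
proof (induction n arbitrary: K)
  case 0 thus ?case by (simp only: perm_segment.simps(1) permutes_id)
next
  case (Suc n)
  have "perm_segment \<rho> (Suc K) n permutes {..<v}" using Suc by simp
  moreover have "\<rho> K permutes {..<v}" using Suc.prems by (simp add: perm_seqs_permutes)
  ultimately show ?case by (simp only: perm_segment.simps permutes_compose)
qed

lemma perm_prefix_permutes: "\<rho> \<in> perm_seqs v t \<Longrightarrow> K \<le> Suc t \<Longrightarrow> perm_prefix \<rho> K permutes {..<v}"
proof (induction K)
  case 0 thus ?case by (simp only: perm_prefix.simps(1) permutes_id)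
next
  case (Suc K)
  then have "perm_prefix \<rho> K permutes {..<v}" "\<rho> K permutes {..<v}"
    by (simp_all add: perm_seqs_permutes)
  then show ?case by (simp only: perm_prefix.simps permutes_compose)
qed

lemma permutes_lessThan_less: "p permutes {..<v} \<Longrightarrow> a < v \<Longrightarrow> p a < v"
  using permutes_in_image[of p "{..<v}" a] by simp

lemma permutes_lessThan_inv_less: "p permutes {..<v} \<Longrightarrow> a < v \<Longrightarrow> inv p a < v"
  by (rule permutes_lessThan_less[OF permutes_inv])

lemma permutes_inv_into_eq_inv: "p permutes A \<Longrightarrow> a \<in> A \<Longrightarrow> inv_into A p a = inv p a"
  by (rule inv_into_f_eq) (auto simp: permutes_inj_on permutes_inverses permutes_in_image permutes_inv)

lemma inv_perm_segment:
  assumes "\<rho> \<in> perm_seqs v t" "K \<le> Suc t"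
  shows "inv (perm_segment \<rho> K (Suc t - K)) = inv (perm_prefix \<rho> (Suc t)) \<circ> perm_prefix \<rho> K"
proof -
  have bij_prefix: "bij (perm_prefix \<rho> K)"
    using perm_prefix_permutes[OF assms] by (rule permutes_bij)
  have "bij (perm_segment \<rho> K (Suc t - K))"
    using perm_segment_permutes[OF assms(1), of K "Suc t - K"] assms(2) by (simp add: permutes_bij)
  moreover have "perm_prefix \<rho> (Suc t) = perm_prefix \<rho> K \<circ> perm_segment \<rho> K (Suc t - K)"
    using perm_prefix_comp_segment[of \<rho> K "Suc t - K"] assms(2) by simp
  ultimately show ?thesis
    using bij_prefix by (simp add: o_inv_distrib o_assoc bij_is_inj)
qed

lemma perm_prefix_split:
  "k0 \<le> t \<Longrightarrow> perm_prefix \<rho> (Suc t) = perm_prefix \<rho> k0 \<circ> \<rho> k0 \<circ> perm_segment \<rho> (Suc k0) (t - k0)"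
  using perm_prefix_comp_segment[of \<rho> k0 "Suc (t - k0)"] by (simp add: o_assoc)

section \<open>Correctness of the two phases\<close>

lemma CHAR_2_add_self:
  assumes "CHAR('f::field) = 2"
  shows "(x::'f) + x = 0"
proof -
  have "(2::'f) = 0" using of_nat_CHAR[where 'a='f] unfolding assms by simp
  thus ?thesis by (metis mult_2 mult_zero_left)
qed

lemma bwd_eq:
  assumes char: "CHAR('f::field) = 2" and \<rho>: "perm c \<in> perm_seqs v t"
    and "n \<le> Suc t" "a < v"
  shows "bwd v t (c::'f coins) n a
      = secret c (inv (perm_segment (perm c) (Suc t - n) n) a) + (\<Sum>j\<le>t. sh c (Suc t - n) a j)"
  using assms(3,4)
proof (induction n arbitrary: a)
  case 0
  thus ?case by (simp add: sender_pad_def)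
next
  case (Suc n)
  define K where "K = t - n"
  have K: "Suc t - n = Suc K" "Suc t - Suc n = K" "t - n = K" "K \<le> t"
    using Suc.prems by (auto simp: K_def)
  have pK: "perm c K permutes {..<v}" using perm_seqs_permutes[OF \<rho> K(4)] .
  define b where "b = inv (perm c K) a"
  have b: "b < v" "perm c K b = a"
    using permutes_lessThan_inv_less[OF pK Suc.prems(2)] permutes_inverses(1)[OF pK]
    by (auto simp: b_def)
  have inv_seg: "inv (perm_segment (perm c) (Suc K) n) b = inv (perm_segment (perm c) K (Suc n)) a"
  proof -
    have "bij (perm_segment (perm c) (Suc K) n)"
      using perm_segment_permutes[OF \<rho>, of "Suc K" n] Suc.prems K by (intro permutes_bij) auto
    thus ?thesis using permutes_bij[OF pK] by (simp add: o_inv_distrib b_def)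
  qed
  have IH: "bwd v t c n b = secret c (inv (perm_segment (perm c) (Suc K) n) b)
      + (\<Sum>j\<le>t. sh c (Suc K) b j)"
    using Suc.IH[OF _ b(1)] Suc.prems K(1) by simp
  have sh_Suc: "(\<Sum>j\<le>t. sh c (Suc K) b j) = Omega t c K b + (\<Sum>j\<le>t. sh c K a j)"
    by (simp add: Omega_def sum.distrib b(2))
  have "bwd v t c (Suc n) a = bwd v t c n b + Omega t c K b"
    using Suc.prems(2) permutes_inv_into_eq_inv[OF pK] by (simp add: K b_def)
  also have "\<dots> = secret c (inv (perm_segment (perm c) K (Suc n)) a)
      + (\<Sum>j\<le>t. sh c K a j) + (Omega t c K b + Omega t c K b)"
    unfolding IH sh_Suc inv_seg by (simp add: algebra_simps)
  also have "\<dots> = secret c (inv (perm_segment (perm c) K (Suc n)) a) + (\<Sum>j\<le>t. sh c K a j)"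
    by (simp add: CHAR_2_add_self[OF char])
  finally show ?case unfolding K(2) .
qed

lemma cipher_level_eq:
  assumes "CHAR('f::field) = 2" "perm c \<in> perm_seqs v t" "K \<le> Suc t" "a < v"
  shows "cipher_level v t (c::'f coins) K a
     = secret c (inv (perm_segment (perm c) K (Suc t - K)) a) + (\<Sum>j\<le>t. sh c K a j)"
  using bwd_eq[OF assms(1,2), of "Suc t - K" a] assms(3,4) by (simp add: cipher_level_def)

lemma cipher_level_outside: "v \<le> a \<Longrightarrow> cipher_level v t c K a = 0"
  by (cases "Suc t - K") (auto simp: cipher_level_def)

lemma sender_of_coins_of:
  assumes "b \<in> coin_space v t" "a < v"
  shows "sender_of v t (coins_of t b m) a = inv (perm_prefix (fst (snd b)) (Suc t)) a"
  unfolding sender_of_def comp_perm_eq_perm_prefix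
  using permutes_inv_into_eq_inv[OF perm_prefix_permutes[OF coin_space_perm_seqs[OF assms(1)] order_refl]]
    assms(2) by simp

lemma sender_of_less:
  assumes "b \<in> coin_space v t" "a < v"
  shows "sender_of v t (coins_of t b m) a < v"
  unfolding sender_of_coins_of[OF assms]
  using perm_prefix_permutes[OF coin_space_perm_seqs[OF assms(1)] order_refl] assms(2)
  by (rule permutes_lessThan_inv_less)

lemma received_eq_secret_sender_of:
  assumes char: "CHAR('f::field) = 2" and b: "b \<in> coin_space v t" and a: "a < v"
  shows "received v t (coins_of t b m :: 'f coins) a = m (sender_of v t (coins_of t b m) a)"
proof -
  let ?c = "coins_of t b m" and ?\<rho> = "fst (snd b)"
  have \<rho>: "?\<rho> \<in> perm_seqs v t" using b by (rule coin_space_perm_seqs)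
  have "inv (perm_segment ?\<rho> 0 (Suc t)) = inv (perm_prefix ?\<rho> (Suc t))"
    using inv_perm_segment[OF \<rho>, of 0] by simp
  then have "received v t ?c a = m (inv (perm_prefix ?\<rho> (Suc t)) a)
      + ((\<Sum>j\<le>t. fst b a j) + (\<Sum>j\<le>t. fst b a j))"
    unfolding received_def using cipher_level_eq[OF char _ _ a, where c = ?c and K = 0] \<rho>
    by (simp add: row_sums_def add.assoc)
  also have "\<dots> = m (sender_of v t ?c a)"
    by (simp add: CHAR_2_add_self[OF char] sender_of_coins_of[OF b a])
  finally show ?thesis .
qed

lemma set_pmf_coins_pmf:
  "c \<in> set_pmf (coins_pmf v t M) \<Longrightarrow> \<exists>b m. b \<in> coin_space v t \<and> c = coins_of t b m"
  unfolding coins_pmf_eq_uniform by (auto simp: finite_coin_space coin_space_nonempty)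

lemma coins_pmf_reliable:
  assumes "CHAR('f::{finite,field}) = 2"
  shows "AE c in measure_pmf (coins_pmf v t (M :: (nat \<Rightarrow> 'f) pmf)).
           \<forall>a<v. received v t c a = secret c (sender_of v t c a)"
  using assms by (intro AE_pmfI) (auto dest!: set_pmf_coins_pmf simp: received_eq_secret_sender_of)

section \<open>Privacy\<close>

lemma exists_less_eq_notin_image:
  assumes "finite C" "card C \<le> t"
  shows "\<exists>k\<le>t. k \<notin> f ` C"
proof -
  have "card (f ` C) < card {..t}" using card_image_le[OF assms(1), of f] assms(2) by simp
  hence "\<not> {..t} \<subseteq> f ` C" using card_mono[of "f ` C" "{..t}"] assms(1) by auto
  thus ?thesis by auto
qed

lemma unused_block_and_column:
  assumes "C \<subseteq> {..t} \<times> {..t}" "card C \<le> t"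
  obtains k0 j0 where "k0 \<le> t" "\<forall>s\<in>C. fst s \<noteq> k0" "j0 \<le> t" "\<forall>s\<in>C. snd s \<noteq> j0"
proof -
  have "finite C" using assms(1) by (rule finite_subset) simp
  then obtain k0 j0 where "k0 \<le> t" "k0 \<notin> fst ` C" "j0 \<le> t" "j0 \<notin> snd ` C"
    using exists_less_eq_notin_image assms(2) by metis
  then show ?thesis using that by blast
qed

lemma coalition_view_cong:
  "(\<And>s. s \<in> C \<Longrightarrow> V' s = V s) \<Longrightarrow> coalition_view C V' = coalition_view C V"
  by (auto simp: coalition_view_def fun_eq_iff)

lemma coalition_view_viewA:
  "coalition_view C (viewA v t c) = (\<lambda>s. map_option fst (coalition_view C (viewAB v t c) s))"
  by (simp add: coalition_view_def viewAB_def fun_eq_iff)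

lemma viewA_cong:
  assumes "\<And>i. i < v \<Longrightarrow> sh c' k i j = sh c k i j" "perm c' k = perm c k" "modif c' k = modif c k"
  shows "viewA v t c' (k, j) = viewA v t c (k, j)"
  using assms by (auto simp: viewA_def fun_eq_iff)

lemma viewAB_cong:
  assumes "\<And>i. i < v \<Longrightarrow> sh c' k i j = sh c k i j" "perm c' k = perm c k" "modif c' k = modif c k"
    and "j = 0 \<Longrightarrow> cipher_level v t c' (Suc k) = cipher_level v t c (Suc k)"
  shows "viewAB v t c' (k, j) = viewAB v t c (k, j)"
  using assms viewA_cong[OF assms(1-3)] by (simp add: viewAB_def)

lemma view_useless_coins_pmf_by_symmetry:
  fixes W :: "'f::{finite,field} coins \<Rightarrow> 'w"
  assumes Xs: "finite Xs" "Xs \<noteq> {}"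
    and X_in: "\<And>b m. b \<in> coin_space v t \<Longrightarrow> X (coins_of t b m) \<in> Xs"
    and sym: "\<And>m x x'. x \<in> Xs \<Longrightarrow> x' \<in> Xs \<Longrightarrow> \<exists>\<phi>. bij_betw \<phi> (coin_space v t) (coin_space v t)
       \<and> (\<forall>b\<in>coin_space v t. W (coins_of t (\<phi> b) m) = W (coins_of t b m))
       \<and> (\<forall>b\<in>coin_space v t. X (coins_of t b m) = x \<longrightarrow> X (coins_of t (\<phi> b) m) = x')"
  shows "view_useless (coins_pmf v t M) W X"
  using coins_pmf_eq_uniform
proof (rule view_useless_mixture_indep)
  fix m
  show "map_pmf (\<lambda>b. (W (coins_of t b m), X (coins_of t b m))) (pmf_of_set (coin_space v t))
      = pair_pmf (map_pmf (\<lambda>b. W (coins_of t b m)) (pmf_of_set (coin_space v t))) (pmf_of_set Xs)"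
    using sym by (intro map_pmf_of_set_indep_by_symmetry Xs X_in finite_coin_space coin_space_nonempty)
qed

text \<open>Adding D i to the share of slot i in column j0 changes nothing seen by servers outside
 column j0.\<close>
definition shift_column ::
    "nat \<Rightarrow> (nat \<Rightarrow> 'f::monoid_add) \<Rightarrow> (nat \<Rightarrow> nat \<Rightarrow> 'f) \<times> 'r \<Rightarrow> (nat \<Rightarrow> nat \<Rightarrow> 'f) \<times> 'r" where
  "shift_column j0 D b = ((\<lambda>i j. fst b i j + (if j = j0 then D i else 0)), snd b)"

lemma snd_shift_column [simp]: "snd (shift_column j0 D b) = snd b"
  by (simp add: shift_column_def)

lemma shift_column_mem:
  "b \<in> coin_space v t \<Longrightarrow> j0 \<le> t \<Longrightarrow> (\<And>i. v \<le> i \<Longrightarrow> D i = 0)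
     \<Longrightarrow> shift_column j0 D b \<in> coin_space v t"
  by (cases b) (auto simp: coin_space_def mem_share_mats shift_column_def)

lemma bij_betw_shift_column:
  fixes D :: "(nat \<Rightarrow> nat \<Rightarrow> nat) \<Rightarrow> nat \<Rightarrow> 'f::{ab_group_add}"
  assumes "j0 \<le> t" "\<And>\<rho> i. v \<le> i \<Longrightarrow> D \<rho> i = 0"
  shows "bij_betw (\<lambda>b. shift_column j0 (D (fst (snd b))) b) (coin_space v t) (coin_space v t)"
proof (rule bij_betw_byWitness[where f'="\<lambda>b. shift_column j0 (\<lambda>i. - D (fst (snd b)) i) b"])
  show "(\<lambda>b. shift_column j0 (D (fst (snd b))) b) ` coin_space v t \<subseteq> coin_space v t"
    and "(\<lambda>b. shift_column j0 (\<lambda>i. - D (fst (snd b)) i) b) ` coin_space v t \<subseteq> coin_space v t"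
    using assms by (auto intro!: shift_column_mem)
qed (auto simp: shift_column_def fun_eq_iff)

lemma sh_shift_column:
  assumes "\<And>i j. share c' i j = share c i j + (if j = j0 then D i else 0)"
    and "\<And>l. l < k \<Longrightarrow> perm c' l = perm c l \<and> modif c' l = modif c l"
  shows "sh c' k i j = sh c k i j + (if j = j0 then D (perm_prefix (perm c) k i) else 0)"
  using assms(2)
proof (induction k arbitrary: i)
  case 0 thus ?case by (simp add: assms(1))
next
  case (Suc k)
  thus ?case using Suc.IH[of "perm c' k i"] by (simp add: add.assoc)
qed

lemma sh_coins_of_shift_column:
  "sh (coins_of t (shift_column j0 D b) m) k i j
     = sh (coins_of t b m') k i j + (if j = j0 then D (perm_prefix (fst (snd b)) k i) else 0)"
  using sh_shift_column[of "coins_of t (shift_column j0 D b) m" "coins_of t b m'"]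
  by (simp add: shift_column_def)

lemma view_useless_viewA_by_shift_column:
  fixes X :: "'f::{finite,field} coins \<Rightarrow> 'f"
  assumes j: "j \<le> t" "\<forall>s\<in>C. snd s \<noteq> j"
    and r: "\<And>\<rho>. \<rho> \<in> perm_seqs v t \<Longrightarrow> r \<rho> < v"
    and X: "\<And>b m D. b \<in> coin_space v t \<Longrightarrow>
       X (coins_of t (shift_column j D b) m) = X (coins_of t b m) + D (r (fst (snd b)))"
  shows "view_useless (coins_pmf v t M) (\<lambda>c. coalition_view C (viewA v t c)) X"
proof (rule view_useless_coins_pmf_by_symmetry[where Xs = UNIV])
  fix m and x x' :: 'f
  define \<phi> :: "'f choice \<Rightarrow> 'f choice"
    where "\<phi> b = shift_column j (\<lambda>i. if i = r (fst (snd b)) \<and> i < v then x' - x else 0) b" for b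
  have "bij_betw \<phi> (coin_space v t) (coin_space v t)"
    unfolding \<phi>_def by (rule bij_betw_shift_column) (use j r in \<open>auto simp: coin_space_def\<close>)
  moreover have "coalition_view C (viewA v t (coins_of t (\<phi> b) m)) = coalition_view C (viewA v t (coins_of t b m))"
    for b
  proof (rule coalition_view_cong)
    fix s assume "s \<in> C"
    then obtain k j' where s: "s = (k, j')" "j' \<noteq> j" using j by (cases s) auto
    show "viewA v t (coins_of t (\<phi> b) m) s = viewA v t (coins_of t b m) s"
      unfolding s(1) by (rule viewA_cong) (simp_all add: s(2) \<phi>_def sh_coins_of_shift_column[where m'=m])
  qed
  moreover have "X (coins_of t (\<phi> b) m) = x'" if "b \<in> coin_space v t" "X (coins_of t b m) = x" for b
  proof -
    have "r (fst (snd b)) < v" using that(1) r by (auto simp: coin_space_def)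
    thus ?thesis using that by (simp add: \<phi>_def X)
  qed
  ultimately show "\<exists>\<phi>. bij_betw \<phi> (coin_space v t) (coin_space v t)
       \<and> (\<forall>b\<in>coin_space v t. coalition_view C (viewA v t (coins_of t (\<phi> b) m))
            = coalition_view C (viewA v t (coins_of t b m)))
       \<and> (\<forall>b\<in>coin_space v t. X (coins_of t b m) = x \<longrightarrow> X (coins_of t (\<phi> b) m) = x')"
    by blast
qed simp_all

lemma pad_private:
  assumes "j0 \<le> t" "\<forall>s\<in>C. snd s \<noteq> j0" "a < v"
  shows "view_useless (coins_pmf v t (M :: (nat \<Rightarrow> 'f::{finite,field}) pmf))
           (\<lambda>c. coalition_view C (viewA v t c)) (\<lambda>c. pad c a)"
  by (rule view_useless_viewA_by_shift_column[where j = j0 and r = "\<lambda>_. a"])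
    (use assms in \<open>simp_all add: shift_column_def row_sums_def sum.distrib\<close>)

lemma sender_pad_private:
  assumes "j0 \<le> t" "\<forall>s\<in>C. snd s \<noteq> j0" "i < v"
  shows "view_useless (coins_pmf v t (M :: (nat \<Rightarrow> 'f::{finite,field}) pmf))
           (\<lambda>c. coalition_view C (viewA v t c)) (\<lambda>c. sender_pad t c i)"
proof (rule view_useless_viewA_by_shift_column[where j = j0 and r = "\<lambda>\<rho>. perm_prefix \<rho> (Suc t) i"])
  show "perm_prefix \<rho> (Suc t) i < v" if "\<rho> \<in> perm_seqs v t" for \<rho>
    using perm_prefix_permutes[OF that order_refl] assms(3) by (rule permutes_lessThan_less)
  show "sender_pad t (coins_of t (shift_column j0 D b) m) i
      = sender_pad t (coins_of t b m) i + D (perm_prefix (fst (snd b)) (Suc t) i)" for b m D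
    unfolding sender_pad_def sh_coins_of_shift_column[where m'=m] using assms(1)
    by (simp add: sum.distrib)
qed (use assms in auto)

text \<open>Adding secret_column to the shares of column j0 makes each slot carry the secret routed
 to it; with this the ciphertexts no longer depend on the secrets.\<close>
definition secret_column ::
    "nat \<Rightarrow> nat \<Rightarrow> (nat \<Rightarrow> 'f::zero) \<Rightarrow> (nat \<Rightarrow> nat \<Rightarrow> nat) \<Rightarrow> nat \<Rightarrow> 'f" where
  "secret_column v t m \<rho> i = (if i < v then m (inv (perm_prefix \<rho> (Suc t)) i) else 0)"

lemma cipher_level_shift_secret_column:
  assumes char: "CHAR('f::field) = 2" and b: "b \<in> coin_space v t" and j0: "j0 \<le> t"
    and K: "K \<le> Suc t"
  shows "cipher_level v t (coins_of t (shift_column j0 (secret_column v t m (fst (snd b))) b) (\<lambda>_. 0)) K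
       = cipher_level v t (coins_of t b m :: 'f coins) K"
proof
  fix a
  let ?\<rho> = "fst (snd b)"
    and ?c' = "coins_of t (shift_column j0 (secret_column v t m (fst (snd b))) b) (\<lambda>_. 0)"
  have \<rho>: "?\<rho> \<in> perm_seqs v t" using b by (rule coin_space_perm_seqs)
  show "cipher_level v t ?c' K a = cipher_level v t (coins_of t b m) K a"
  proof (cases "a < v")
    case False thus ?thesis by (simp add: cipher_level_outside)
  next
    case True
    have "perm_prefix ?\<rho> K a < v"
      using perm_prefix_permutes[OF \<rho> K] True by (rule permutes_lessThan_less)
    then have moved: "secret_column v t m ?\<rho> (perm_prefix ?\<rho> K a)
        = m (inv (perm_segment ?\<rho> K (Suc t - K)) a)"
      by (simp add: secret_column_def inv_perm_segment[OF \<rho> K])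
    have "cipher_level v t ?c' K a = (\<Sum>j\<le>t. sh ?c' K a j)"
      using cipher_level_eq[OF char _ K True, where c = ?c'] \<rho> by simp
    also have "\<dots> = (\<Sum>j\<le>t. sh (coins_of t b m) K a j) + m (inv (perm_segment ?\<rho> K (Suc t - K)) a)"
      using j0 by (simp add: sh_coins_of_shift_column[where m'=m] sum.distrib moved)
    also have "\<dots> = cipher_level v t (coins_of t b m) K a"
      using cipher_level_eq[OF char _ K True, where c = "coins_of t b m"] \<rho> by (simp add: add.commute)
    finally show ?thesis .
  qed
qed

lemma secret_private:
  assumes char: "CHAR('f) = 2" and j0: "j0 \<le> t" "\<forall>s\<in>C. snd s \<noteq> j0"
    and C: "C \<subseteq> {..t} \<times> {..t}"
  shows "view_useless (coins_pmf v t (M :: (nat \<Rightarrow> 'f::{finite,field}) pmf))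
           (\<lambda>c. coalition_view C (viewAB v t c)) (\<lambda>c. secret c i)"
  using coins_pmf_eq_uniform
proof (rule view_useless_mixture_param_free)
  fix m :: "nat \<Rightarrow> 'f"
  let ?W = "\<lambda>m b. coalition_view C (viewAB v t (coins_of t b m))"
  define \<phi> :: "'f choice \<Rightarrow> 'f choice" where
    "\<phi> b = shift_column j0 (secret_column v t m (fst (snd b))) b" for b
  have bij: "bij_betw \<phi> (coin_space v t) (coin_space v t)"
    unfolding \<phi>_def by (rule bij_betw_shift_column) (simp_all add: j0 secret_column_def)
  have "?W (\<lambda>_. 0) (\<phi> b) = ?W m b" if b: "b \<in> coin_space v t" for b
  proof (rule coalition_view_cong)
    fix s assume "s \<in> C"
    moreover obtain k j where "s = (k, j)" by (cases s)
    ultimately have s: "s = (k, j)" "j \<noteq> j0" "k \<le> t" using j0 C by auto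
    show "viewAB v t (coins_of t (\<phi> b) (\<lambda>_. 0)) s = viewAB v t (coins_of t b m) s"
      unfolding s(1) using s(2,3)
      by (intro viewAB_cong)
        (simp_all add: \<phi>_def sh_coins_of_shift_column[where m'=m]
          cipher_level_shift_secret_column[OF char b j0(1)])
  qed
  then have "map_pmf (?W m) (pmf_of_set (coin_space v t))
      = map_pmf (?W (\<lambda>_. 0)) (map_pmf \<phi> (pmf_of_set (coin_space v t)))"
    unfolding map_pmf_comp
    by (intro map_pmf_cong) (simp_all add: finite_coin_space coin_space_nonempty)
  also have "\<dots> = map_pmf (?W (\<lambda>_. 0)) (pmf_of_set (coin_space v t))"
    by (simp add: map_pmf_of_set_bij_betw[OF bij coin_space_nonempty finite_coin_space])
  finally show "map_pmf (\<lambda>b. coalition_view C (viewAB v t (coins_of t b m))) (pmf_of_set (coin_space v t))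
      = map_pmf (?W (\<lambda>_. 0)) (pmf_of_set (coin_space v t))" .
qed simp

section \<open>Anonymity\<close>

lemma sh_cong:
  assumes "share c' = share c"
    and "\<And>l. l < k \<Longrightarrow> perm c' l = perm c l" "\<And>l. l < k \<Longrightarrow> modif c' l = modif c l"
  shows "sh c' k = sh c k"
  using assms(2,3) by (induction k) (simp_all add: assms(1))

lemma sh_coins_of_secret: "sh (coins_of t b m) k = sh (coins_of t b m') k"
  by (rule sh_cong) simp_all

lemma sh_eq_from:
  assumes "\<And>i j. i < v \<Longrightarrow> j \<le> t \<Longrightarrow> sh c' K i j = sh c K i j"
    and "\<And>l. K \<le> l \<Longrightarrow> l < K + n \<Longrightarrow> perm c' l = perm c l \<and> modif c' l = modif c l"
    and "\<And>l. K \<le> l \<Longrightarrow> l < K + n \<Longrightarrow> perm c l permutes {..<v}"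
  shows "i < v \<Longrightarrow> j \<le> t \<Longrightarrow> sh c' (K + n) i j = sh c (K + n) i j"
  using assms(2,3)
proof (induction n arbitrary: i)
  case 0 thus ?case by (simp add: assms(1))
next
  case (Suc n)
  have "sh c' (K + n) (perm c (K + n) i) j = sh c (K + n) (perm c (K + n) i) j"
    using Suc permutes_lessThan_less[of "perm c (K + n)" v i] by simp
  thus ?case using Suc.prems(3)[of "K + n"] by simp
qed

text \<open>Rerouting the pad of sender x to sender x' through the unseen block k0: the column-j0
 shares absorb the change of the ciphertexts seen by the leaders of earlier blocks, and the
 modifiers of block k0 are chosen so that all shares of later blocks stay the same.\<close>
context
  fixes v t k0 j0 x x' :: nat and m :: "nat \<Rightarrow> 'f::field"
  assumes k0: "k0 \<le> t" and j0: "j0 \<le> t" and x: "x < v" "x' < v"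
begin

definition tail_perm :: "(nat \<Rightarrow> nat \<Rightarrow> nat) \<Rightarrow> nat \<Rightarrow> nat" where
  "tail_perm \<rho> = perm_segment \<rho> (Suc k0) (t - k0)"

definition swap_tails :: "(nat \<Rightarrow> nat \<Rightarrow> nat) \<Rightarrow> nat \<Rightarrow> nat" where
  "swap_tails \<rho> = Transposition.transpose (tail_perm \<rho> x) (tail_perm \<rho> x')"

definition reroute :: "(nat \<Rightarrow> nat \<Rightarrow> nat) \<Rightarrow> nat \<Rightarrow> nat \<Rightarrow> nat" where
  "reroute \<rho> = \<rho>(k0 := \<rho> k0 \<circ> swap_tails \<rho>)"

definition reroute_shift :: "(nat \<Rightarrow> nat \<Rightarrow> nat) \<Rightarrow> nat \<Rightarrow> 'f" where
  "reroute_shift \<rho> i = secret_column v t m \<rho> i - secret_column v t m (reroute \<rho>) i"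

definition reroute_shares :: "'f choice \<Rightarrow> 'f choice" where
  "reroute_shares b = shift_column j0 (reroute_shift (fst (snd b))) b"

definition reroute_modif :: "'f choice \<Rightarrow> nat \<Rightarrow> nat \<Rightarrow> nat \<Rightarrow> 'f" where
  "reroute_modif b k i j = snd (snd b) k i j + (if k = k0 \<and> i < v \<and> j \<le> t then
      sh (coins_of t b (\<lambda>_. 0)) k0 (fst (snd b) k0 i) j
      - sh (coins_of t (reroute_shares b) (\<lambda>_. 0)) k0 (reroute (fst (snd b)) k0 i) j else 0)"

definition reroute_choice :: "'f choice \<Rightarrow> 'f choice" where
  "reroute_choice b = (fst (reroute_shares b), reroute (fst (snd b)), reroute_modif b)"

lemma reroute_choice_components [simp]:
  "fst (reroute_choice b) = fst (reroute_shares b)"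
  "fst (snd (reroute_choice b)) = reroute (fst (snd b))"
  "snd (snd (reroute_choice b)) = reroute_modif b"
  by (simp_all add: reroute_choice_def)

lemma reroute_other: "l \<noteq> k0 \<Longrightarrow> reroute \<rho> l = \<rho> l"
  by (simp add: reroute_def)

lemma tail_perm_reroute: "tail_perm (reroute \<rho>) = tail_perm \<rho>"
  unfolding tail_perm_def by (rule perm_segment_cong) (simp add: reroute_other)

lemma reroute_at: "reroute \<rho> k0 = \<rho> k0 \<circ> swap_tails \<rho>"
  by (simp add: reroute_def)

lemma swap_tails_reroute: "swap_tails (reroute \<rho>) = swap_tails \<rho>"
  by (simp add: swap_tails_def tail_perm_reroute)

lemma reroute_reroute: "reroute (reroute \<rho>) = \<rho>"
proof
  fix l
  show "reroute (reroute \<rho>) l = \<rho> l"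
  proof (cases "l = k0")
    case True
    have "reroute (reroute \<rho>) k0 = \<rho> k0 \<circ> (swap_tails \<rho> \<circ> swap_tails \<rho>)"
      by (simp only: reroute_at swap_tails_reroute o_assoc)
    thus ?thesis using True by (simp add: swap_tails_def)
  qed (simp add: reroute_other)
qed

lemma perm_prefix_reroute: "K \<le> k0 \<Longrightarrow> perm_prefix (reroute \<rho>) K = perm_prefix \<rho> K"
  by (rule perm_prefix_cong) (simp add: reroute_other)

lemma reroute_mem: "\<rho> \<in> perm_seqs v t \<Longrightarrow> reroute \<rho> \<in> perm_seqs v t"
proof -
  assume \<rho>: "\<rho> \<in> perm_seqs v t"
  have "tail_perm \<rho> permutes {..<v}"
    unfolding tail_perm_def using k0 by (intro perm_segment_permutes[OF \<rho>]) simp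
  hence "tail_perm \<rho> y < v" if "y < v" for y
    using that by (rule permutes_lessThan_less)
  hence "swap_tails \<rho> permutes {..<v}"
    unfolding swap_tails_def using x by (intro permutes_swap_id) auto
  hence "\<rho> k0 \<circ> swap_tails \<rho> permutes {..<v}"
    using perm_seqs_permutes[OF \<rho> k0] by (rule permutes_compose)
  thus ?thesis using \<rho> k0 by (auto simp: mem_perm_seqs reroute_def)
qed

lemma perm_prefix_reroute_moves: "perm_prefix (reroute \<rho>) (Suc t) x' = perm_prefix \<rho> (Suc t) x"
proof -
  have "perm_prefix (reroute \<rho>) (Suc t) x' = perm_prefix \<rho> k0 (\<rho> k0 (swap_tails \<rho> (tail_perm \<rho> x')))"
    unfolding perm_prefix_split[OF k0] tail_perm_def[symmetric]
    by (simp add: perm_prefix_reroute reroute_at tail_perm_reroute)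
  also have "\<dots> = perm_prefix \<rho> (Suc t) x"
    unfolding perm_prefix_split[OF k0] tail_perm_def[symmetric] by (simp add: swap_tails_def)
  finally show ?thesis .
qed

lemma reroute_shift_reroute: "reroute_shift (reroute \<rho>) = (\<lambda>i. - reroute_shift \<rho> i)"
  by (simp add: reroute_shift_def reroute_reroute fun_eq_iff)

lemma fst_reroute_shares:
  "fst (reroute_shares b) i j = fst b i j + (if j = j0 then reroute_shift (fst (snd b)) i else 0)"
  by (simp add: reroute_shares_def shift_column_def)

lemma reroute_shift_outside: "v \<le> i \<Longrightarrow> reroute_shift \<rho> i = 0"
  by (simp add: reroute_shift_def secret_column_def)

lemma reroute_choice_mem:
  assumes b: "b \<in> coin_space v t"
  shows "reroute_choice b \<in> coin_space v t"
proof -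
  have "reroute_shares b \<in> coin_space v t"
    unfolding reroute_shares_def using b j0 by (rule shift_column_mem) (rule reroute_shift_outside)
  moreover have "reroute (fst (snd b)) \<in> perm_seqs v t"
    using coin_space_perm_seqs[OF b] by (rule reroute_mem)
  moreover have "reroute_modif b \<in> modif_arrays v t"
    using b k0 by (auto simp: mem_modif_arrays coin_space_def reroute_modif_def)
  ultimately show ?thesis by (auto simp: coin_space_def reroute_choice_def)
qed

lemma sh_reroute_choice_below:
  assumes "K \<le> k0"
  shows "sh (coins_of t (reroute_choice b) m') K = sh (coins_of t (reroute_shares b) m'') K"
  using assms
  by (intro sh_cong) (auto simp: reroute_choice_def reroute_other reroute_modif_def
      reroute_shares_def fun_eq_iff)

lemma fst_reroute_shares_reroute_choice: "fst (reroute_shares (reroute_choice b)) = fst b"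
  by (simp add: fun_eq_iff fst_reroute_shares reroute_choice_def reroute_shift_reroute)

lemma sh_reroute_shares_reroute_choice:
  "sh (coins_of t (reroute_shares (reroute_choice b)) m') k0 = sh (coins_of t b m'') k0"
proof (rule sh_cong)
  show "share (coins_of t (reroute_shares (reroute_choice b)) m') = share (coins_of t b m'')"
    by (simp add: fst_reroute_shares_reroute_choice)
qed (auto simp: reroute_shares_def shift_column_def reroute_choice_def reroute_other
      reroute_modif_def fun_eq_iff)

lemma reroute_modif_reroute_choice: "reroute_modif (reroute_choice b) = snd (snd b)"
proof (intro ext)
  fix k i j
  let ?\<rho> = "fst (snd b)" and ?P = "k = k0 \<and> i < v \<and> j \<le> t"
  let ?A = "sh (coins_of t b (\<lambda>_. 0)) k0 (?\<rho> k0 i) j"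
    and ?B = "sh (coins_of t (reroute_shares b) (\<lambda>_. 0)) k0 (reroute ?\<rho> k0 i) j"
  have "reroute_modif (reroute_choice b) k i j = reroute_modif b k i j + (if ?P then ?B - ?A else 0)"
    unfolding reroute_modif_def[of "reroute_choice b"]
      sh_reroute_choice_below[OF order_refl, where m'' = "\<lambda>_. 0"]
      sh_reroute_shares_reroute_choice[where m'' = "\<lambda>_. 0"]
    by (simp add: reroute_choice_def reroute_reroute)
  also have "\<dots> = snd (snd b) k i j"
    by (simp add: reroute_modif_def)
  finally show "reroute_modif (reroute_choice b) k i j = snd (snd b) k i j" .
qed

lemma reroute_choice_reroute_choice: "reroute_choice (reroute_choice b) = b"
  using fst_reroute_shares_reroute_choice[of b] reroute_modif_reroute_choice[of b]
  by (simp add: reroute_choice_def[of "reroute_choice b"])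
    (simp add: reroute_choice_def reroute_reroute)

lemma bij_betw_reroute_choice: "bij_betw reroute_choice (coin_space v t) (coin_space v t)"
  by (rule bij_betw_byWitness[where f' = reroute_choice])
    (auto simp: reroute_choice_reroute_choice reroute_choice_mem)

lemma sh_reroute_choice_low:
  assumes "K \<le> k0"
  shows "sh (coins_of t (reroute_choice b) m') K i j = sh (coins_of t b m'') K i j
     + (if j = j0 then reroute_shift (fst (snd b)) (perm_prefix (fst (snd b)) K i) else 0)"
  unfolding sh_reroute_choice_below[OF assms, where m'' = m'] reroute_shares_def
  by (rule sh_coins_of_shift_column)

lemma sh_reroute_choice_Suc_k0:
  assumes "i < v" "j \<le> t"
  shows "sh (coins_of t (reroute_choice b) m') (Suc k0) i j = sh (coins_of t b m'') (Suc k0) i j"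
proof -
  have "sh (coins_of t (reroute_choice b) m') (Suc k0) i j = reroute_modif b k0 i j
      + sh (coins_of t (reroute_shares b) (\<lambda>_. 0)) k0 (reroute (fst (snd b)) k0 i) j"
    by (simp add: sh_reroute_choice_below[OF order_refl, where m'' = "\<lambda>_. 0"])
  also have "\<dots> = snd (snd b) k0 i j + sh (coins_of t b m'') k0 (fst (snd b) k0 i) j"
    using assms by (simp add: reroute_modif_def sh_coins_of_secret[of t b "\<lambda>_. 0" k0 m''])
  finally show ?thesis by simp
qed

lemma sh_reroute_choice_high:
  assumes b: "b \<in> coin_space v t" and K: "Suc k0 \<le> K" "K \<le> Suc t" and ij: "i < v" "j \<le> t"
  shows "sh (coins_of t (reroute_choice b) m') K i j = sh (coins_of t b m'') K i j"
proof -
  have "sh (coins_of t (reroute_choice b) m') (Suc k0 + (K - Suc k0)) i j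
      = sh (coins_of t b m'') (Suc k0 + (K - Suc k0)) i j"
  proof (rule sh_eq_from[OF _ _ _ ij])
    show "sh (coins_of t (reroute_choice b) m') (Suc k0) i' j' = sh (coins_of t b m'') (Suc k0) i' j'"
      if "i' < v" "j' \<le> t" for i' j'
      using that by (rule sh_reroute_choice_Suc_k0)
    show "perm (coins_of t b m'') l permutes {..<v}" if "Suc k0 \<le> l" "l < Suc k0 + (K - Suc k0)" for l
      using that K perm_seqs_permutes[OF coin_space_perm_seqs[OF b]] by simp
  qed (auto simp: reroute_other reroute_modif_def fun_eq_iff)
  thus ?thesis using K by simp
qed

lemma cipher_level_reroute_choice_high:
  assumes char: "CHAR('f) = 2" and b: "b \<in> coin_space v t"
    and K: "Suc k0 \<le> K" "K \<le> Suc t" and a: "a < v"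
  shows "cipher_level v t (coins_of t (reroute_choice b) m) K a = cipher_level v t (coins_of t b m) K a"
proof -
  let ?\<rho> = "fst (snd b)"
  have "perm_segment (reroute ?\<rho>) K (Suc t - K) = perm_segment ?\<rho> K (Suc t - K)"
    using K by (intro perm_segment_cong) (simp add: reroute_other)
  moreover have "sh (coins_of t (reroute_choice b) m) K a j = sh (coins_of t b m) K a j" if "j \<le> t" for j
    using K a that by (rule sh_reroute_choice_high[OF b])
  moreover have "reroute ?\<rho> \<in> perm_seqs v t" "?\<rho> \<in> perm_seqs v t"
    using b by (simp_all add: reroute_mem coin_space_perm_seqs)
  ultimately show ?thesis using K by (simp add: cipher_level_eq[OF char _ _ a])
qed

lemma cipher_level_reroute_choice_low:
  assumes char: "CHAR('f) = 2" and b: "b \<in> coin_space v t" and K: "K \<le> k0" and a: "a < v"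
  shows "cipher_level v t (coins_of t (reroute_choice b) m) K a = cipher_level v t (coins_of t b m) K a"
proof -
  let ?\<rho> = "fst (snd b)" and ?c = "coins_of t b m" and ?c' = "coins_of t (reroute_choice b) m"
  have \<rho>: "?\<rho> \<in> perm_seqs v t" using b by (rule coin_space_perm_seqs)
  have \<rho>': "reroute ?\<rho> \<in> perm_seqs v t" using \<rho> by (rule reroute_mem)
  have K_le: "K \<le> Suc t" using K k0 by simp
  define y where "y = perm_prefix ?\<rho> K a"
  have "y < v" unfolding y_def using perm_prefix_permutes[OF \<rho> K_le] a by (rule permutes_lessThan_less)
  hence shift: "reroute_shift ?\<rho> y = m (inv (perm_prefix ?\<rho> (Suc t)) y)
      - m (inv (perm_prefix (reroute ?\<rho>) (Suc t)) y)"
    by (simp add: reroute_shift_def secret_column_def)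
  have "cipher_level v t ?c' K a
      = m (inv (perm_prefix (reroute ?\<rho>) (Suc t)) y) + (\<Sum>j\<le>t. sh ?c' K a j)"
    using cipher_level_eq[OF char _ K_le a, where c = ?c'] \<rho>'
    by (simp add: inv_perm_segment[OF \<rho>' K_le] perm_prefix_reroute[OF K] y_def)
  also have "(\<Sum>j\<le>t. sh ?c' K a j) = (\<Sum>j\<le>t. sh ?c K a j) + reroute_shift ?\<rho> y"
    unfolding y_def using j0 by (simp add: sh_reroute_choice_low[OF K, where m'' = m] sum.distrib)
  also have "cipher_level v t ?c K a = m (inv (perm_prefix ?\<rho> (Suc t)) y) + (\<Sum>j\<le>t. sh ?c K a j)"
    using cipher_level_eq[OF char _ K_le a, where c = ?c] \<rho>
    by (simp add: inv_perm_segment[OF \<rho> K_le] y_def)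
  ultimately show ?thesis unfolding shift by (simp add: algebra_simps del: perm_prefix.simps)
qed

lemma cipher_level_reroute_choice:
  assumes "CHAR('f) = 2" "b \<in> coin_space v t" "K \<le> Suc t"
  shows "cipher_level v t (coins_of t (reroute_choice b) m) K = cipher_level v t (coins_of t b m) K"
proof
  fix a
  show "cipher_level v t (coins_of t (reroute_choice b) m) K a = cipher_level v t (coins_of t b m) K a"
    using assms cipher_level_reroute_choice_low[of b K a] cipher_level_reroute_choice_high[of b K a]
    by (cases "a < v"; cases "K \<le> k0") (auto simp: cipher_level_outside)
qed

lemma viewAB_reroute_choice:
  assumes char: "CHAR('f) = 2" and b: "b \<in> coin_space v t"
    and kj: "k \<le> t" "j \<le> t" "k \<noteq> k0" "j \<noteq> j0"
  shows "viewAB v t (coins_of t (reroute_choice b) m) (k, j) = viewAB v t (coins_of t b m) (k, j)"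
proof (rule viewAB_cong)
  show "sh (coins_of t (reroute_choice b) m) k i j = sh (coins_of t b m) k i j" if "i < v" for i
  proof (cases "k < k0")
    case True thus ?thesis using kj by (simp add: sh_reroute_choice_low[where m'' = m])
  next
    case False thus ?thesis using kj that by (intro sh_reroute_choice_high[OF b]) simp_all
  qed
qed (use kj in \<open>simp_all add: reroute_other reroute_modif_def fun_eq_iff
      cipher_level_reroute_choice[OF char b]\<close>)

lemma sender_of_reroute_choice:
  assumes b: "b \<in> coin_space v t" and a: "a < v" and "sender_of v t (coins_of t b m') a = x"
  shows "sender_of v t (coins_of t (reroute_choice b) m'') a = x'"
proof -
  let ?\<rho> = "fst (snd b)"
  have \<rho>: "?\<rho> \<in> perm_seqs v t" using b by (rule coin_space_perm_seqs)
  have b': "reroute_choice b \<in> coin_space v t" using b by (rule reroute_choice_mem)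
  have "perm_prefix ?\<rho> (Suc t) x = a"
    using assms(3) permutes_inv_eq[OF perm_prefix_permutes[OF \<rho> order_refl]]
    by (simp add: sender_of_coins_of[OF b a] del: perm_prefix.simps)
  hence "perm_prefix (reroute ?\<rho>) (Suc t) x' = a" by (simp add: perm_prefix_reroute_moves del: perm_prefix.simps)
  thus ?thesis
    using permutes_inv_eq[OF perm_prefix_permutes[OF reroute_mem[OF \<rho>] order_refl]]
    by (simp add: sender_of_coins_of[OF b' a] del: perm_prefix.simps)
qed

lemma reroute_choice_hides_sender:
  assumes char: "CHAR('f) = 2"
    and C: "C \<subseteq> {..t} \<times> {..t}" "\<forall>s\<in>C. fst s \<noteq> k0" "\<forall>s\<in>C. snd s \<noteq> j0"
    and a: "a < v"
  shows "\<exists>\<phi>. bij_betw \<phi> (coin_space v t) (coin_space v t)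
    \<and> (\<forall>b\<in>coin_space v t. coalition_view C (viewAB v t (coins_of t (\<phi> b) m))
          = coalition_view C (viewAB v t (coins_of t b m)))
    \<and> (\<forall>b\<in>coin_space v t. sender_of v t (coins_of t b m) a = x
          \<longrightarrow> sender_of v t (coins_of t (\<phi> b) m) a = x')"
proof (intro exI[of _ reroute_choice] conjI ballI impI bij_betw_reroute_choice)
  fix b :: "'f choice" assume b: "b \<in> coin_space v t"
  show "coalition_view C (viewAB v t (coins_of t (reroute_choice b) m))
      = coalition_view C (viewAB v t (coins_of t b m))"
  proof (rule coalition_view_cong)
    fix s assume "s \<in> C"
    moreover obtain k j where "s = (k, j)" by (cases s)
    ultimately show "viewAB v t (coins_of t (reroute_choice b) m) s = viewAB v t (coins_of t b m) s"
      using C by (auto intro!: viewAB_reroute_choice[OF char b])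
  qed
  show "sender_of v t (coins_of t (reroute_choice b) m) a = x'"
    if "sender_of v t (coins_of t b m) a = x" using b a that by (rule sender_of_reroute_choice)
qed

end

lemma sender_of_anonymous:
  assumes char: "CHAR('f) = 2" and C: "C \<subseteq> {..t} \<times> {..t}"
    and k0: "k0 \<le> t" "\<forall>s\<in>C. fst s \<noteq> k0" and j0: "j0 \<le> t" "\<forall>s\<in>C. snd s \<noteq> j0" and a: "a < v"
  shows "view_useless (coins_pmf v t (M :: (nat \<Rightarrow> 'f::{finite,field}) pmf))
           (\<lambda>c. coalition_view C (viewAB v t c)) (\<lambda>c. sender_of v t c a)"
proof (rule view_useless_coins_pmf_by_symmetry[where Xs = "{..<v}"])
  fix m :: "nat \<Rightarrow> 'f" and x x' assume "x \<in> {..<v}" "x' \<in> {..<v}"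
  then have "x < v" "x' < v" by simp_all
  from reroute_choice_hides_sender[where m = m, OF k0(1) j0(1) this char C(1) k0(2) j0(2) a]
  show "\<exists>\<phi>. bij_betw \<phi> (coin_space v t) (coin_space v t)
      \<and> (\<forall>b\<in>coin_space v t. coalition_view C (viewAB v t (coins_of t (\<phi> b) m))
            = coalition_view C (viewAB v t (coins_of t b m)))
      \<and> (\<forall>b\<in>coin_space v t. sender_of v t (coins_of t b m) a = x
            \<longrightarrow> sender_of v t (coins_of t (\<phi> b) m) a = x')" .
qed (use a in \<open>auto simp: sender_of_less\<close>)

lemma sender_of_anonymous_viewA:
  assumes "CHAR('f) = 2" "C \<subseteq> {..t} \<times> {..t}"
    "k0 \<le> t" "\<forall>s\<in>C. fst s \<noteq> k0" "j0 \<le> t" "\<forall>s\<in>C. snd s \<noteq> j0" "a < v"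
  shows "view_useless (coins_pmf v t (M :: (nat \<Rightarrow> 'f::{finite,field}) pmf))
           (\<lambda>c. coalition_view C (viewA v t c)) (\<lambda>c. sender_of v t c a)"
  unfolding coalition_view_viewA
  using sender_of_anonymous[OF assms] by (rule view_useless_coarsen)

theorem theorem1:
  fixes v t :: nat and Mdist :: "(nat \<Rightarrow> 'f::{finite,field}) pmf"
  assumes "CHAR('f) = 2"
  shows
    \<comment> \<open>perfect reliability\<close>
    "(AE c in measure_pmf (coins_pmf v t Mdist).
        \<forall>a<v. received v t c a = secret c (sender_of v t c a))
     \<and> (\<forall>C. C \<subseteq> {..t} \<times> {..t} \<and> card C \<le> t \<longrightarrow>
        \<comment> \<open>perfect privacy of the pads (Phase A)\<close>
        (\<forall>a<v. view_useless (coins_pmf v t Mdist)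
                  (\<lambda>c. coalition_view C (viewA v t c)) (\<lambda>c. pad c a))
      \<and> (\<forall>i<v. view_useless (coins_pmf v t Mdist)
                  (\<lambda>c. coalition_view C (viewA v t c)) (\<lambda>c. sender_pad t c i))
        \<comment> \<open>perfect privacy of the senders' secrets (complete view)\<close>
      \<and> (\<forall>i<v. view_useless (coins_pmf v t Mdist)
                  (\<lambda>c. coalition_view C (viewAB v t c)) (\<lambda>c. secret c i))
        \<comment> \<open>perfect anonymity: who receives pad a / who sent the message R gets in slot a\<close>
      \<and> (\<forall>a<v. view_useless (coins_pmf v t Mdist)
                  (\<lambda>c. coalition_view C (viewA v t c)) (\<lambda>c. sender_of v t c a))
      \<and> (\<forall>a<v. view_useless (coins_pmf v t Mdist)
                  (\<lambda>c. coalition_view C (viewAB v t c)) (\<lambda>c. sender_of v t c a)))"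
  (is "?reliable \<and> (\<forall>C. ?coalition C \<longrightarrow> ?learns_nothing C)")
proof -
  have "?learns_nothing C" if "?coalition C" for C
  proof -
    from that have C: "C \<subseteq> {..t} \<times> {..t}" "card C \<le> t" by simp_all
    obtain k0 j0 where k0: "k0 \<le> t" "\<forall>s\<in>C. fst s \<noteq> k0"
      and j0: "j0 \<le> t" "\<forall>s\<in>C. snd s \<noteq> j0"
      by (rule unused_block_and_column[OF C])
    show ?thesis
      by (intro conjI allI impI pad_private[OF j0] sender_pad_private[OF j0]
          secret_private[OF assms j0 C(1)] sender_of_anonymous_viewA[OF assms C(1) k0 j0]
          sender_of_anonymous[OF assms C(1) k0 j0])
  qed
  then show ?thesis using coins_pmf_reliable[OF assms] by simp
qed

end
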